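(* Let $q\in\mathbb{C}$, $|q|<1$, $\mathbf{s}=(s_1,\dots,s_d)\in\mathbb{N}^d$ and $\mathbf{a}=(a_1,\dots,a_d)\in\mathbb{Z}_{\ge0}^d$ with $a_j\le s_j$ for all $j$, and put $w=s_1+\dots+s_d$. Let $$G(t)=\mathbf{R}^{s_1-a_1}\Big[\mathbf{P}^{a_1}\big[\mathbf{y}\,\mathbf{R}^{s_2-a_2}[\mathbf{P}^{a_2}[\mathbf{y}\cdots\mathbf{R}^{s_d-a_d}[\mathbf{P}^{a_d}[\mathbf{y}]]\cdots]]\big]\Big](t).$$ If $s_1+\dots+s_j>a_1+\dots+a_j$ for all $j=1,\dots,d$, then $\zeta_q^{\mathbf{s}-\mathbf{a}}[\mathbf{s}]=(1-q)^wG(1)$ and $\mathfrak{z}_q^{\mathbf{s}-\mathbf{a}}[\mathbf{s}]=G(1)$, where $\mathbf{s}-\mathbf{a}=(s_1-a_1,\dots,s_d-a_d)$.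
   Context: $\mathfrak{z}_q^{\mathbf{t}}[\mathbf{s}]=\sum_{k_1>\dots>k_d>0}\prod_{j}\frac{q^{k_jt_j}}{(1-q^{k_j})^{s_j}}$ and $\zeta_q^{\mathbf{t}}[\mathbf{s}]=(1-q)^{|\mathbf{s}|}\mathfrak{z}_q^{\mathbf{t}}[\mathbf{s}]$. Operators on power series $f(t)$ without constant term in $t$: $\mathbf{P}[f](t)=\sum_{k\ge0}f(q^kt)$, $\mathbf{R}[f](t)=\sum_{k\ge1}f(q^kt)$, with $n$-fold compositions $\mathbf{P}^n,\mathbf{R}^n$; $\mathbf{y}$ denotes multiplication by $\mathbf{y}(t)=\frac{t}{1-t}$ (the innermost $\mathbf{y}$ being the function itself). $G(1)$ is the value at $t=1$. *)

theory Defs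
  imports "HOL-Analysis.Analysis"
begin

definition mzq :: "complex \<Rightarrow> nat list \<Rightarrow> nat list \<Rightarrow> complex" where
  "mzq q t s = infsum (\<lambda>ks. \<Prod>j<length s. q ^ (ks ! j * t ! j) / (1 - q ^ (ks ! j)) ^ (s ! j))
      {ks. length ks = length s \<and> sorted_wrt (>) ks \<and> (\<forall>k\<in>set ks. 0 < k)}"

definition zetaq :: "complex \<Rightarrow> nat list \<Rightarrow> nat list \<Rightarrow> complex" where
  "zetaq q t s = (1 - q) ^ sum_list s * mzq q t s"

definition Pop :: "complex \<Rightarrow> (complex \<Rightarrow> complex) \<Rightarrow> complex \<Rightarrow> complex" where
  "Pop q f t = (\<Sum>k. f (q ^ k * t))"

definition Rop :: "complex \<Rightarrow> (complex \<Rightarrow> complex) \<Rightarrow> complex \<Rightarrow> complex" where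
  "Rop q f t = (\<Sum>k. f (q ^ Suc k * t))"

definition yfun :: "complex \<Rightarrow> complex" where
  "yfun t = t / (1 - t)"

text \<open>Gfun q s a = R^{s1-a1}[P^{a1}[y R^{s2-a2}[... R^{sd-ad}[P^{ad}[y]]...]]];
  the empty tail is the constant 1, so the innermost y is y itself.\<close>
fun Gfun :: "complex \<Rightarrow> nat list \<Rightarrow> nat list \<Rightarrow> complex \<Rightarrow> complex" where
  "Gfun q [] [] = (\<lambda>_. 1)"
| "Gfun q (s # ss) (a # as) =
     (Rop q ^^ (s - a)) ((Pop q ^^ a) (\<lambda>t. yfun t * Gfun q ss as t))"
| "Gfun q _ _ = (\<lambda>_. 0)"

end

theory Submission
  imports Defs
begin

(*
  Every function occurring in G is, on the open unit disc, the sum of a power series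
  with coefficients c_m (c_0 = 0) of radius of convergence at least 1. Expanding f(q^k t)
  and summing the geometric series in k shows that P and R act diagonally,
  c_m |-> c_m / (1 - q^m) and c_m |-> c_m q^m / (1 - q^m), while multiplication by
  y = t / (1 - t) replaces c_m by the partial sum of c_n over n < m. Hence the m-th
  coefficient of G is the sum of prod_j q^(k_j (s_j - a_j)) / (1 - q^(k_j))^(s_j) over the
  chains m = k_1 > k_2 > ... > k_d > 0. The outermost R evaluates its argument at q t, so
  when s_1 > a_1 the series may be evaluated at t = 1; there the factor q^m makes it
  converge absolutely, and grouping the q-zeta sum by k_1 gives the same series.
*)

lemma norm_one_minus_power_ge:
  fixes q :: "'a::real_normed_algebra_1"
  assumes "norm q \<le> 1" "0 < m"
  shows "1 - norm q \<le> norm (1 - q ^ m)"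
proof -
  have "norm (q ^ m) \<le> norm q ^ m" by (rule norm_power_ineq)
  also have "\<dots> \<le> norm q" using assms by (simp add: power_le_one power_decreasing[of 1 m, simplified])
  finally show ?thesis using norm_triangle_ineq2[of 1 "q ^ m"] by simp
qed

lemma norm_one_over_one_minus_power_le:
  fixes q :: "'a::real_normed_field"
  assumes "norm q < 1"
  shows "norm (1 / (1 - q ^ m)) \<le> 1 / (1 - norm q)"
proof (cases "m = 0")
  case True
  with assms show ?thesis by simp
next
  case False
  then have "1 - norm q \<le> norm (1 - q ^ m)"
    using assms by (intro norm_one_minus_power_ge) auto
  moreover have "0 < 1 - norm q" using assms by simp
  ultimately show ?thesis by (simp add: norm_divide frac_le)
qed

lemma conv_radius_mult_bounded_ge:
  fixes c g :: "nat \<Rightarrow> 'a::{banach, real_normed_field}"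
  assumes bound: "\<And>m. norm (g m) \<le> K"
  shows "conv_radius c \<le> conv_radius (\<lambda>m. g m * c m)"
proof (rule conv_radius_geI_ex')
  fix r :: real assume "0 < r" "ereal r < conv_radius c"
  then have "summable (\<lambda>m. norm (c m * of_real r ^ m))"
    by (intro abs_summable_in_conv_radius) simp
  then have "summable (\<lambda>m. K * norm (c m * of_real r ^ m))" by (rule summable_mult)
  then show "summable (\<lambda>m. g m * c m * of_real r ^ m)"
  proof (rule summable_comparison_test')
    fix m :: nat
    have "norm (g m * c m * of_real r ^ m) = norm (g m) * norm (c m * of_real r ^ m)"
      by (simp add: norm_mult mult.assoc)
    also have "\<dots> \<le> K * norm (c m * of_real r ^ m)" by (rule mult_right_mono[OF bound norm_ge_zero])
    finally show "norm (g m * c m * of_real r ^ m) \<le> K * norm (c m * of_real r ^ m)" .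
  qed
qed

lemma one_le_conv_radius_bounded:
  fixes c :: "nat \<Rightarrow> 'a::{banach, real_normed_field}"
  assumes "\<And>m. norm (c m) \<le> K"
  shows "1 \<le> conv_radius c"
proof -
  have "1 \<le> conv_radius (\<lambda>_. 1 :: 'a)"
  proof (rule conv_radius_geI_ex')
    fix r :: real assume "0 < r" "ereal r < 1"
    then have "norm (of_real r :: 'a) < 1" by simp
    then show "summable (\<lambda>n. 1 * of_real r ^ n :: 'a)"
      using summable_geometric[of "of_real r :: 'a"] by simp
  qed
  also have "\<dots> \<le> conv_radius (\<lambda>m. c m * 1)" by (rule conv_radius_mult_bounded_ge) (rule assms)
  finally show ?thesis by simp
qed

lemma sum_atMost_mult_of_bool_pos:
  fixes c :: "nat \<Rightarrow> 'a::semiring_1"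
  shows "(\<Sum>i\<le>m. c i * of_bool (0 < m - i)) = (\<Sum>i<m. c i)"
proof -
  have "(\<Sum>i\<le>m. c i * of_bool (0 < m - i)) = (\<Sum>i<m. c i * of_bool (0 < m - i))"
    by (simp flip: lessThan_Suc_atMost)
  also have "\<dots> = (\<Sum>i<m. c i)" by (intro sum.cong) auto
  finally show ?thesis .
qed

lemma conv_radius_partial_sums_ge:
  fixes c :: "nat \<Rightarrow> 'a::{banach, real_normed_field}"
  shows "min 1 (conv_radius c) \<le> conv_radius (\<lambda>m. \<Sum>n<m. c n)"
proof -
  have "1 \<le> conv_radius (\<lambda>j. of_bool (0 < j) :: 'a)"
    by (rule one_le_conv_radius_bounded[of _ 1]) simp
  then have "min 1 (conv_radius c) \<le> min (conv_radius c) (conv_radius (\<lambda>j. of_bool (0 < j) :: 'a))"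
    by (auto intro: order_trans[OF min.cobounded1])
  also have "\<dots> \<le> conv_radius (\<lambda>m. \<Sum>i\<le>m. c i * of_bool (0 < m - i))"
    by (rule conv_radius_mult_ge)
  finally show ?thesis by (simp only: sum_atMost_mult_of_bool_pos)
qed

lemma infsum_UNIV_eq_suminf:
  fixes f :: "nat \<Rightarrow> 'a::banach"
  assumes "f summable_on UNIV"
  shows "infsum f UNIV = suminf f"
  using has_sum_imp_sums[OF has_sum_infsum[OF assms]] by (simp add: sums_iff)

lemma suminf_swap_norm_summable:
  fixes a :: "nat \<Rightarrow> nat \<Rightarrow> 'a::banach"
  assumes cols: "\<And>m. summable (\<lambda>k. norm (a k m))"
    and total: "summable (\<lambda>m. \<Sum>k. norm (a k m))"
  shows "(\<Sum>k. \<Sum>m. a k m) = (\<Sum>m. \<Sum>k. a k m)"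
proof -
  have "((\<lambda>k. norm (a k m)) has_sum (\<Sum>k. norm (a k m))) UNIV" for m
    by (rule sums_nonneg_imp_has_sum[OF summable_sums[OF cols]]) simp
  moreover have "(\<lambda>m. \<Sum>k. norm (a k m)) summable_on UNIV"
    by (rule summable_nonneg_imp_summable_on[OF total]) (simp add: suminf_nonneg cols)
  ultimately have "(\<lambda>(m, k). norm (a k m)) summable_on UNIV \<times> UNIV"
    by (intro summable_on_SigmaI[where g = "\<lambda>m. \<Sum>k. norm (a k m)"]) auto
  then have abs_mk: "(\<lambda>p. norm ((\<lambda>(m, k). a k m) p)) summable_on UNIV \<times> UNIV"
    by (simp add: case_prod_unfold)
  then have abs_km: "(\<lambda>p. norm ((\<lambda>(k, m). a k m) p)) summable_on UNIV \<times> UNIV"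
    using summable_on_swap[of "\<lambda>(m, k). norm (a k m)" UNIV UNIV]
    by (simp add: case_prod_unfold)
  have sum_mk: "(\<lambda>(m, k). a k m) summable_on UNIV \<times> UNIV" by (rule abs_summable_summable[OF abs_mk])
  have sum_km: "(\<lambda>(k, m). a k m) summable_on UNIV \<times> UNIV" by (rule abs_summable_summable[OF abs_km])
  have "summable (\<lambda>m. norm (a k m))" for k
    using summable_on_SigmaD1[of "\<lambda>k m. norm (a k m)" UNIV "\<lambda>_. UNIV" k] abs_km
    by (simp add: summable_on_imp_summable case_prod_unfold)
  then have rows: "infsum (\<lambda>m. a k m) UNIV = (\<Sum>m. a k m)" for k
    by (intro infsum_UNIV_eq_suminf norm_summable_imp_summable_on)
  have cols': "infsum (\<lambda>k. a k m) UNIV = (\<Sum>k. a k m)" for m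
    by (intro infsum_UNIV_eq_suminf norm_summable_imp_summable_on cols)
  have "infsum (\<lambda>k. infsum (\<lambda>m. a k m) UNIV) UNIV = infsum (\<lambda>m. infsum (\<lambda>k. a k m) UNIV) UNIV"
    using infsum_swap_banach[of "\<lambda>k m. a k m" UNIV UNIV] sum_km by simp
  moreover have "(\<lambda>k. infsum (\<lambda>m. a k m) UNIV) summable_on UNIV"
    using summable_on_Sigma_banach[of "\<lambda>k m. a k m" UNIV "\<lambda>_. UNIV"] sum_km by simp
  moreover have "(\<lambda>m. infsum (\<lambda>k. a k m) UNIV) summable_on UNIV"
    using summable_on_Sigma_banach[of "\<lambda>m k. a k m" UNIV "\<lambda>_. UNIV"] sum_mk by simp
  ultimately show ?thesis by (simp add: infsum_UNIV_eq_suminf rows cols')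
qed

definition powser_on_unit_disc :: "(nat \<Rightarrow> complex) \<Rightarrow> (complex \<Rightarrow> complex) \<Rightarrow> bool" where
  "powser_on_unit_disc c f \<longleftrightarrow>
     1 \<le> conv_radius c \<and> (\<forall>t. norm t < 1 \<longrightarrow> f t = (\<Sum>m. c m * t ^ m))"

lemma powser_on_unit_disc_abs_summable:
  assumes "powser_on_unit_disc c f" "norm t < 1"
  shows "summable (\<lambda>m. norm (c m * t ^ m))"
proof (rule abs_summable_in_conv_radius)
  have "ereal (norm t) < 1" using assms(2) by simp
  also have "\<dots> \<le> conv_radius c" using assms(1) by (simp add: powser_on_unit_disc_def)
  finally show "ereal (norm t) < conv_radius c" .
qed

lemma sums_geometric_power:
  fixes q t :: "'a::{real_normed_field, banach}"
  assumes "norm q < 1" "0 < m"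
  shows "(\<lambda>k. (q ^ k * t) ^ m) sums (t ^ m / (1 - q ^ m))"
proof -
  have "norm (q ^ m) < 1" using assms by (simp add: norm_power power_less_one_iff)
  then have "(\<lambda>k. t ^ m * (q ^ m) ^ k) sums (t ^ m * (1 / (1 - q ^ m)))"
    by (intro sums_mult geometric_sums)
  moreover have "t ^ m * (q ^ m) ^ k = (q ^ k * t) ^ m" for k
    by (simp add: power_mult_distrib mult.commute flip: power_mult)
  ultimately show ?thesis by simp
qed

lemma summable_norm_divide_one_minus_power:
  fixes q :: "'a::real_normed_field" and b :: "nat \<Rightarrow> 'b::real_normed_vector"
  assumes q: "norm q < 1" and b: "summable (\<lambda>m. norm (b m))"
  shows "summable (\<lambda>m. norm (b m) / (1 - norm q ^ m))"
proof (rule summable_comparison_test')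
  show "summable (\<lambda>m. 1 / (1 - norm q) * norm (b m))"
    by (rule summable_mult[OF b])
  fix m :: nat
  have "\<bar>1 / (1 - norm q ^ m)\<bar> \<le> 1 / (1 - norm q)"
    using norm_one_over_one_minus_power_le[of "norm q" m] q by simp
  moreover have "0 \<le> 1 - norm q ^ m" using q by (simp add: power_le_one)
  ultimately have "norm (b m) * (1 / (1 - norm q ^ m)) \<le> norm (b m) * (1 / (1 - norm q))"
    by (intro mult_left_mono) simp_all
  with \<open>0 \<le> 1 - norm q ^ m\<close>
  show "norm (norm (b m) / (1 - norm q ^ m)) \<le> 1 / (1 - norm q) * norm (b m)"
    by (simp add: mult.commute)
qed

lemma Pop_eq_suminf:
  assumes q: "norm q < 1" and f: "powser_on_unit_disc c f" and c0: "c 0 = 0"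
    and t: "norm t < 1"
  shows "Pop q f t = (\<Sum>m. c m / (1 - q ^ m) * t ^ m)"
proof -
  define a where "a k m = c m * (q ^ k * t) ^ m" for k m
  have col: "(\<lambda>k. a k m) sums (c m / (1 - q ^ m) * t ^ m)" for m
  proof (cases "m = 0")
    case False
    then show ?thesis
      using sums_mult[OF sums_geometric_power[OF q, of m t], of "c m"] by (simp add: a_def)
  qed (simp add: a_def c0)
  have col_norm: "(\<lambda>k. norm (a k m)) sums (norm (c m * t ^ m) / (1 - norm q ^ m))" for m
  proof (cases "m = 0")
    case False
    then show ?thesis
      using sums_mult[OF sums_geometric_power[of "norm q" m "norm t"], of "norm (c m)"] q
      by (simp add: a_def norm_mult norm_power)
  qed (simp add: a_def c0)
  have "summable (\<lambda>m. \<Sum>k. norm (a k m))"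
    using summable_norm_divide_one_minus_power[OF q powser_on_unit_disc_abs_summable[OF f t]] col_norm
    by (simp add: sums_iff)
  then have "(\<Sum>k. \<Sum>m. a k m) = (\<Sum>m. \<Sum>k. a k m)"
    using col_norm by (intro suminf_swap_norm_summable) (auto simp: sums_iff)
  moreover have "norm (q ^ k * t) < 1" for k
  proof -
    have "norm (q ^ k) * norm t \<le> norm t"
      using q by (intro mult_left_le_one_le) (auto simp: norm_power power_le_one)
    then show ?thesis using t by (simp add: norm_mult)
  qed
  then have "Pop q f t = (\<Sum>k. \<Sum>m. a k m)"
    using f by (simp add: Pop_def a_def powser_on_unit_disc_def)
  ultimately show ?thesis using col by (simp add: sums_iff)
qed

lemma Pop_powser:
  assumes q: "norm q < 1" and f: "powser_on_unit_disc c f" and c0: "c 0 = 0"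
  shows "powser_on_unit_disc (\<lambda>m. c m / (1 - q ^ m)) (Pop q f)"
  unfolding powser_on_unit_disc_def
proof (intro conjI allI impI)
  have "1 \<le> conv_radius c" using f by (simp add: powser_on_unit_disc_def)
  also have "\<dots> \<le> conv_radius (\<lambda>m. 1 / (1 - q ^ m) * c m)"
    by (rule conv_radius_mult_bounded_ge[OF norm_one_over_one_minus_power_le[OF q]])
  finally show "1 \<le> conv_radius (\<lambda>m. c m / (1 - q ^ m))" by simp
qed (rule Pop_eq_suminf[OF q f c0])

lemma Pop_funpow_powser:
  assumes q: "norm q < 1" and f: "powser_on_unit_disc c f" and c0: "c 0 = 0"
  shows "powser_on_unit_disc (\<lambda>m. c m / (1 - q ^ m) ^ n) ((Pop q ^^ n) f)"
proof (induction n)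
  case 0
  then show ?case using f by simp
next
  case (Suc n)
  have "powser_on_unit_disc (\<lambda>m. c m / (1 - q ^ m) ^ n / (1 - q ^ m)) (Pop q ((Pop q ^^ n) f))"
    by (rule Pop_powser[OF q Suc]) (simp add: c0)
  then show ?case by (simp only: funpow.simps comp_def power_Suc2 divide_divide_eq_left)
qed

lemma Rop_eq_Pop_scaled: "Rop q f t = Pop q f (q * t)"
  unfolding Rop_def Pop_def by (simp add: mult_ac)

lemma Rop_eq_suminf:
  assumes q: "norm q < 1" and f: "powser_on_unit_disc c f" and c0: "c 0 = 0"
    and t: "norm t \<le> 1"
  shows "Rop q f t = (\<Sum>m. c m * (q ^ m / (1 - q ^ m)) * t ^ m)"
proof -
  have "norm (q * t) < 1"
    using q t by (simp add: norm_mult) (meson le_less_trans mult_left_le norm_ge_zero)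
  then have "Rop q f t = (\<Sum>m. c m / (1 - q ^ m) * (q * t) ^ m)"
    unfolding Rop_eq_Pop_scaled by (rule Pop_eq_suminf[OF q f c0])
  then show ?thesis by (simp add: power_mult_distrib mult_ac)
qed

lemma Rop_powser:
  assumes q: "norm q < 1" and f: "powser_on_unit_disc c f" and c0: "c 0 = 0"
  shows "powser_on_unit_disc (\<lambda>m. c m * (q ^ m / (1 - q ^ m))) (Rop q f)"
  unfolding powser_on_unit_disc_def
proof (intro conjI allI impI)
  have "norm (q ^ m / (1 - q ^ m)) \<le> 1 / (1 - norm q)" for m
  proof -
    have "norm (q ^ m / (1 - q ^ m)) = norm (q ^ m) * norm (1 / (1 - q ^ m))"
      by (simp add: norm_divide)
    also have "\<dots> \<le> 1 * (1 / (1 - norm q))"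
      using q by (intro mult_mono norm_one_over_one_minus_power_le) (auto simp: norm_power power_le_one)
    finally show ?thesis by simp
  qed
  then have "conv_radius c \<le> conv_radius (\<lambda>m. q ^ m / (1 - q ^ m) * c m)"
    by (rule conv_radius_mult_bounded_ge)
  moreover have "1 \<le> conv_radius c" using f by (simp add: powser_on_unit_disc_def)
  ultimately show "1 \<le> conv_radius (\<lambda>m. c m * (q ^ m / (1 - q ^ m)))"
    by (simp add: mult.commute)
next
  fix t :: complex assume "norm t < 1"
  then show "Rop q f t = (\<Sum>m. c m * (q ^ m / (1 - q ^ m)) * t ^ m)"
    by (intro Rop_eq_suminf[OF q f c0]) simp
qed

lemma Rop_funpow_powser:
  assumes q: "norm q < 1" and f: "powser_on_unit_disc c f" and c0: "c 0 = 0"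
  shows "powser_on_unit_disc (\<lambda>m. c m * (q ^ m / (1 - q ^ m)) ^ n) ((Rop q ^^ n) f)"
proof (induction n)
  case 0
  then show ?case using f by simp
next
  case (Suc n)
  have "powser_on_unit_disc (\<lambda>m. c m * (q ^ m / (1 - q ^ m)) ^ n * (q ^ m / (1 - q ^ m)))
      (Rop q ((Rop q ^^ n) f))"
    by (rule Rop_powser[OF q Suc]) (simp add: c0)
  then show ?case by (simp only: funpow.simps comp_def power_Suc2 mult.assoc)
qed

lemma powser_on_unit_disc_mult:
  assumes f: "powser_on_unit_disc c f" and g: "powser_on_unit_disc d g"
  shows "powser_on_unit_disc (\<lambda>m. \<Sum>i\<le>m. c i * d (m - i)) (\<lambda>t. f t * g t)"
  unfolding powser_on_unit_disc_def
proof (intro conjI allI impI)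
  have "min (conv_radius c) (conv_radius d) \<le> conv_radius (\<lambda>m. \<Sum>i\<le>m. c i * d (m - i))"
    by (rule conv_radius_mult_ge)
  then show "1 \<le> conv_radius (\<lambda>m. \<Sum>i\<le>m. c i * d (m - i))"
    using f g by (simp add: powser_on_unit_disc_def min_def split: if_splits)
next
  fix t :: complex assume t: "norm t < 1"
  have "f t * g t = (\<Sum>m. \<Sum>i\<le>m. c i * t ^ i * (d (m - i) * t ^ (m - i)))"
    using f g t unfolding powser_on_unit_disc_def
    by (simp add: Cauchy_product powser_on_unit_disc_abs_summable[OF f t]
        powser_on_unit_disc_abs_summable[OF g t])
  also have "\<dots> = (\<Sum>m. (\<Sum>i\<le>m. c i * d (m - i)) * t ^ m)"
  proof (rule suminf_cong)
    fix m
    have "(\<Sum>i\<le>m. c i * t ^ i * (d (m - i) * t ^ (m - i))) = (\<Sum>i\<le>m. c i * d (m - i) * t ^ m)"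
    proof (rule sum.cong[OF refl])
      fix i assume "i \<in> {..m}"
      then have "t ^ i * t ^ (m - i) = t ^ m" by (simp flip: power_add)
      then show "c i * t ^ i * (d (m - i) * t ^ (m - i)) = c i * d (m - i) * t ^ m"
        by (metis mult.assoc mult.left_commute)
    qed
    then show "(\<Sum>i\<le>m. c i * t ^ i * (d (m - i) * t ^ (m - i))) = (\<Sum>i\<le>m. c i * d (m - i)) * t ^ m"
      by (simp only: sum_distrib_right)
  qed
  finally show "f t * g t = (\<Sum>m. (\<Sum>i\<le>m. c i * d (m - i)) * t ^ m)" .
qed

lemma yfun_powser: "powser_on_unit_disc (\<lambda>j. of_bool (0 < j)) yfun"
  unfolding powser_on_unit_disc_def
proof (intro conjI allI impI)
  show "1 \<le> conv_radius (\<lambda>j. of_bool (0 < j) :: complex)"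
    by (rule one_le_conv_radius_bounded[of _ 1]) simp
next
  fix t :: complex assume t: "norm t < 1"
  have "(\<lambda>j. t * t ^ j) sums (t * (1 / (1 - t)))"
    by (intro sums_mult geometric_sums t)
  then have "(\<lambda>j. of_bool (0 < j) * t ^ j) sums yfun t"
    using sums_Suc_iff[of "\<lambda>j. of_bool (0 < j) * t ^ j"] by (simp add: yfun_def)
  then show "yfun t = (\<Sum>j. of_bool (0 < j) * t ^ j)" by (simp add: sums_iff)
qed

lemma yfun_mult_powser:
  assumes f: "powser_on_unit_disc c f"
  shows "powser_on_unit_disc (\<lambda>m. \<Sum>n<m. c n) (\<lambda>t. yfun t * f t)"
proof -
  have "powser_on_unit_disc (\<lambda>m. \<Sum>n<m. c n) (\<lambda>t. f t * yfun t)"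
    using powser_on_unit_disc_mult[OF f yfun_powser] by (simp only: sum_atMost_mult_of_bool_pos)
  then show ?thesis by (simp add: mult.commute)
qed

definition zeta_factor :: "complex \<Rightarrow> nat \<Rightarrow> nat \<Rightarrow> nat \<Rightarrow> complex" where
  "zeta_factor q s a k = q ^ (k * (s - a)) / (1 - q ^ k) ^ s"

(* The coefficient sequence of Gfun; sum_prod_pos_desc_lists_head identifies its m-th term
   with the sum over the chains with k_1 = m. *)
fun chain_coeff ::
  "(nat \<Rightarrow> nat \<Rightarrow> nat \<Rightarrow> 'b::comm_semiring_1) \<Rightarrow> nat list \<Rightarrow> nat list \<Rightarrow> nat \<Rightarrow> 'b"
where
  "chain_coeff g [] [] m = (if m = 0 then 1 else 0)"
| "chain_coeff g (s # ss) (a # as) m = g s a m * (\<Sum>n<m. chain_coeff g ss as n)"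
| "chain_coeff g _ _ m = 0"

lemma coeff_Pop_Rop_eq_zeta_factor:
  assumes "a \<le> s"
  shows "h / (1 - q ^ m) ^ a * (q ^ m / (1 - q ^ m)) ^ (s - a) = zeta_factor q s a m * h"
proof -
  have "h / (1 - q ^ m) ^ a * (q ^ m / (1 - q ^ m)) ^ (s - a)
      = h * q ^ (m * (s - a)) / ((1 - q ^ m) ^ a * (1 - q ^ m) ^ (s - a))"
    by (simp add: power_divide power_mult times_divide_times_eq)
  also have "(1 - q ^ m) ^ a * (1 - q ^ m) ^ (s - a) = (1 - q ^ m) ^ s"
    using assms by (simp flip: power_add)
  finally show ?thesis by (simp add: zeta_factor_def)
qed

lemma powser_Pop_funpow_yfun:
  assumes q: "norm q < 1" and f: "powser_on_unit_disc c f"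
  shows "powser_on_unit_disc (\<lambda>m. (\<Sum>n<m. c n) / (1 - q ^ m) ^ a) ((Pop q ^^ a) (\<lambda>t. yfun t * f t))"
  by (rule Pop_funpow_powser[OF q yfun_mult_powser[OF f]]) simp

lemma Gfun_powser:
  assumes q: "norm q < 1"
  shows "length ss = length as \<Longrightarrow> \<forall>j<length ss. as ! j \<le> ss ! j \<Longrightarrow>
    powser_on_unit_disc (chain_coeff (zeta_factor q) ss as) (Gfun q ss as)"
proof (induction ss as rule: list_induct2)
  case Nil
  have "(\<lambda>m. (if m = 0 then 1 else 0) * t ^ m) sums 1" for t :: complex
    using powser_sums_if[of 0 t] by simp
  moreover have "1 \<le> conv_radius (chain_coeff (zeta_factor q) [] [])"
    by (rule one_le_conv_radius_bounded[of _ 1]) simp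
  ultimately show ?case by (simp add: powser_on_unit_disc_def sums_iff)
next
  case (Cons s ss a as)
  have "a \<le> s" using Cons.prems[rule_format, of 0] by simp
  have "powser_on_unit_disc (chain_coeff (zeta_factor q) ss as) (Gfun q ss as)"
    using Cons by force
  then have "powser_on_unit_disc (\<lambda>m. (\<Sum>n<m. chain_coeff (zeta_factor q) ss as n) / (1 - q ^ m) ^ a)
      ((Pop q ^^ a) (\<lambda>t. yfun t * Gfun q ss as t))"
    by (rule powser_Pop_funpow_yfun[OF q])
  then have "powser_on_unit_disc
      (\<lambda>m. (\<Sum>n<m. chain_coeff (zeta_factor q) ss as n) / (1 - q ^ m) ^ a * (q ^ m / (1 - q ^ m)) ^ (s - a))
      (Gfun q (s # ss) (a # as))"
    unfolding Gfun.simps by (rule Rop_funpow_powser[OF q]) simp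
  moreover have "(\<lambda>m. (\<Sum>n<m. chain_coeff (zeta_factor q) ss as n) / (1 - q ^ m) ^ a
      * (q ^ m / (1 - q ^ m)) ^ (s - a)) = chain_coeff (zeta_factor q) (s # ss) (a # as)"
    by (rule ext) (simp only: chain_coeff.simps coeff_Pop_Rop_eq_zeta_factor[OF \<open>a \<le> s\<close>])
  ultimately show ?case by (simp only:)
qed

lemma Gfun_Cons_at_1:
  assumes q: "norm q < 1" and len: "length ss = length as"
    and le: "\<forall>j<length ss. as ! j \<le> ss ! j" and lt: "a < s"
  shows "Gfun q (s # ss) (a # as) 1 = (\<Sum>m. chain_coeff (zeta_factor q) (s # ss) (a # as) m)"
proof -
  obtain b where b: "s - a = Suc b" using lt by (metis Suc_diff_Suc)
  define d where "d m = (\<Sum>n<m. chain_coeff (zeta_factor q) ss as n) / (1 - q ^ m) ^ a" for m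
  define F where "F = (Pop q ^^ a) (\<lambda>t. yfun t * Gfun q ss as t)"
  have "powser_on_unit_disc d F"
    unfolding d_def F_def by (rule powser_Pop_funpow_yfun[OF q Gfun_powser[OF q len le]])
  then have RF: "powser_on_unit_disc (\<lambda>m. d m * (q ^ m / (1 - q ^ m)) ^ b) ((Rop q ^^ b) F)"
    by (rule Rop_funpow_powser[OF q]) (simp add: d_def)
  have "Gfun q (s # ss) (a # as) 1 = Rop q ((Rop q ^^ b) F) 1"
    by (simp add: b F_def)
  also have "\<dots> = (\<Sum>m. d m * (q ^ m / (1 - q ^ m)) ^ b * (q ^ m / (1 - q ^ m)) * 1 ^ m)"
    by (rule Rop_eq_suminf[OF q RF]) (simp_all add: d_def)
  also have "\<dots> = (\<Sum>m. chain_coeff (zeta_factor q) (s # ss) (a # as) m)"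
  proof (rule suminf_cong)
    fix m
    have "d m * (q ^ m / (1 - q ^ m)) ^ b * (q ^ m / (1 - q ^ m)) * 1 ^ m
        = d m * (q ^ m / (1 - q ^ m)) ^ (s - a)"
      by (simp only: b power_Suc2 mult.assoc power_one mult_1_right)
    also have "\<dots> = chain_coeff (zeta_factor q) (s # ss) (a # as) m"
      using coeff_Pop_Rop_eq_zeta_factor[of a s] lt by (simp add: d_def)
    finally show "d m * (q ^ m / (1 - q ^ m)) ^ b * (q ^ m / (1 - q ^ m)) * 1 ^ m
        = chain_coeff (zeta_factor q) (s # ss) (a # as) m" .
  qed
  finally show ?thesis .
qed

definition pos_desc_lists :: "nat \<Rightarrow> nat list set" where
  "pos_desc_lists d = {ks. length ks = d \<and> sorted_wrt (>) ks \<and> (\<forall>k\<in>set ks. 0 < k)}"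

fun head_or_zero :: "nat list \<Rightarrow> nat" where
  "head_or_zero [] = 0"
| "head_or_zero (k # _) = k"

lemma head_or_zero_less_iff:
  assumes "sorted_wrt (>) ks"
  shows "head_or_zero ks < m \<longleftrightarrow> 0 < m \<and> (\<forall>k\<in>set ks. k < m)"
  using assms by (cases ks) auto

lemma finite_pos_desc_lists_head_le: "finite {ks \<in> pos_desc_lists d. head_or_zero ks \<le> M}"
proof (rule finite_subset)
  show "{ks \<in> pos_desc_lists d. head_or_zero ks \<le> M} \<subseteq> {ks. set ks \<subseteq> {..M} \<and> length ks = d}"
  proof
    fix ks assume "ks \<in> {ks \<in> pos_desc_lists d. head_or_zero ks \<le> M}"
    then have len: "length ks = d" and sorted: "sorted_wrt (>) ks" and "head_or_zero ks \<le> M"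
      by (auto simp: pos_desc_lists_def)
    then have "\<forall>k\<in>set ks. k < Suc M" using head_or_zero_less_iff[OF sorted, of "Suc M"] by simp
    with len show "ks \<in> {ks. set ks \<subseteq> {..M} \<and> length ks = d}"
      by (auto simp: less_Suc_eq_le)
  qed
  show "finite {ks. set ks \<subseteq> {..M} \<and> length ks = d}"
    by (rule finite_lists_length_eq) simp
qed

lemma pos_desc_lists_Suc_head:
  "{ks \<in> pos_desc_lists (Suc d). head_or_zero ks = m} =
   Cons m ` {ks \<in> pos_desc_lists d. head_or_zero ks < m}"
proof (intro equalityI subsetI)
  fix ks assume "ks \<in> {ks \<in> pos_desc_lists (Suc d). head_or_zero ks = m}"
  then obtain ks' where ks: "ks = m # ks'" and "length ks' = d" "sorted_wrt (>) (m # ks')"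
    "\<forall>k\<in>set (m # ks'). 0 < k"
    by (cases ks) (auto simp: pos_desc_lists_def)
  then have "ks' \<in> {ks \<in> pos_desc_lists d. head_or_zero ks < m}"
    by (simp add: pos_desc_lists_def head_or_zero_less_iff)
  then show "ks \<in> Cons m ` {ks \<in> pos_desc_lists d. head_or_zero ks < m}"
    using ks by blast
next
  fix ks assume "ks \<in> Cons m ` {ks \<in> pos_desc_lists d. head_or_zero ks < m}"
  then obtain ks' where "ks = m # ks'" "ks' \<in> pos_desc_lists d" "head_or_zero ks' < m"
    by blast
  then show "ks \<in> {ks \<in> pos_desc_lists (Suc d). head_or_zero ks = m}"
    by (simp add: pos_desc_lists_def head_or_zero_less_iff)
qed

lemma sum_prod_pos_desc_lists_head:
  "length ss = length as \<Longrightarrow>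
   (\<Sum>ks\<in>{ks \<in> pos_desc_lists (length ss). head_or_zero ks = m}.
      \<Prod>j<length ss. g (ss ! j) (as ! j) (ks ! j)) = chain_coeff g ss as m"
proof (induction ss as arbitrary: m rule: list_induct2)
  case Nil
  have "{ks \<in> pos_desc_lists 0. head_or_zero ks = m} = (if m = 0 then {[]} else {})"
    by (auto simp: pos_desc_lists_def)
  then show ?case by simp
next
  case (Cons s ss a as)
  let ?P = "\<lambda>ks. \<Prod>j<length ss. g (ss ! j) (as ! j) (ks ! j)"
  let ?A = "{ks \<in> pos_desc_lists (length ss). head_or_zero ks < m}"
  have "(\<Sum>ks\<in>{ks \<in> pos_desc_lists (length (s # ss)). head_or_zero ks = m}.
          \<Prod>j<length (s # ss). g ((s # ss) ! j) ((a # as) ! j) (ks ! j))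
      = (\<Sum>ks\<in>?A. \<Prod>j<Suc (length ss). g ((s # ss) ! j) ((a # as) ! j) ((m # ks) ! j))"
    unfolding length_Cons pos_desc_lists_Suc_head by (rule sum.reindex_cong[OF inj_on_Cons1 refl]) simp
  also have "\<dots> = (\<Sum>ks\<in>?A. g s a m * ?P ks)"
    by (simp only: prod.lessThan_Suc_shift nth_Cons_0 nth_Cons_Suc)
  also have "\<dots> = g s a m * (\<Sum>ks\<in>?A. ?P ks)" by (simp add: sum_distrib_left)
  also have "(\<Sum>ks\<in>?A. ?P ks) = (\<Sum>n<m. \<Sum>ks\<in>{ks \<in> ?A. head_or_zero ks = n}. ?P ks)"
    by (rule sum.group[symmetric])
       (auto intro: finite_subset[OF _ finite_pos_desc_lists_head_le[of _ m]])
  also have "\<dots> = (\<Sum>n<m. chain_coeff g ss as n)"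
  proof (intro sum.cong refl)
    fix n assume "n \<in> {..<m}"
    then have "{ks \<in> ?A. head_or_zero ks = n} = {ks \<in> pos_desc_lists (length ss). head_or_zero ks = n}"
      by auto
    then show "(\<Sum>ks\<in>{ks \<in> ?A. head_or_zero ks = n}. ?P ks) = chain_coeff g ss as n"
      using Cons.IH by simp
  qed
  finally show ?case by simp
qed

lemma chain_coeff_norm_nonneg: "0 \<le> chain_coeff (\<lambda>s a k. norm (g s a k)) ss as m"
proof (induction ss as arbitrary: m rule: list_induct2')
  case (4 s ss a as)
  then show ?case by (simp add: sum_nonneg)
qed simp_all

lemma conv_radius_chain_coeff:
  fixes g :: "nat \<Rightarrow> nat \<Rightarrow> nat \<Rightarrow> 'a::{banach, real_normed_field}"
  assumes bound: "\<And>s a m. norm (g s a m) \<le> B s a"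
  shows "1 \<le> conv_radius (chain_coeff g ss as)"
proof (induction ss as rule: list_induct2')
  case 1
  show ?case by (rule one_le_conv_radius_bounded[of _ 1]) simp
next
  case (2 s ss)
  show ?case by (rule one_le_conv_radius_bounded[of _ 0]) simp
next
  case (3 a as)
  show ?case by (rule one_le_conv_radius_bounded[of _ 0]) simp
next
  case (4 s ss a as)
  have "1 \<le> min 1 (conv_radius (chain_coeff g ss as))" using 4 by simp
  also have "\<dots> \<le> conv_radius (\<lambda>m. \<Sum>n<m. chain_coeff g ss as n)"
    by (rule conv_radius_partial_sums_ge)
  also have "\<dots> \<le> conv_radius (\<lambda>m. g s a m * (\<Sum>n<m. chain_coeff g ss as n))"
    by (rule conv_radius_mult_bounded_ge[OF bound])
  finally show ?case by (simp add: fun_eq_iff)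
qed

lemma has_sum_infsum_UN:
  fixes f :: "'a \<Rightarrow> 'b::banach"
  assumes f: "f summable_on (\<Union>x\<in>A. B x)" and disj: "disjoint_family_on B A"
  shows "((\<lambda>x. infsum f (B x)) has_sum infsum f (\<Union>x\<in>A. B x)) A"
proof -
  have inj: "inj_on snd (Sigma A B)"
    using disj by (force simp: disjoint_family_on_def inj_on_def)
  have image: "snd ` Sigma A B = (\<Union>x\<in>A. B x)" by force
  have "(f \<circ> snd) summable_on Sigma A B"
    using summable_on_reindex[OF inj, of f] f image by simp
  then have Sigma: "(\<lambda>(x, y). f y) summable_on Sigma A B"
    by (simp add: comp_def case_prod_unfold)
  have "infsum f (\<Union>x\<in>A. B x) = infsum (\<lambda>(x, y). f y) (Sigma A B)"
    using infsum_reindex[OF inj, of f] image by (simp add: comp_def case_prod_unfold)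
  also have "\<dots> = infsum (\<lambda>x. infsum f (B x)) A"
    using infsum_Sigma'_banach[of "\<lambda>x y. f y" A B] Sigma by simp
  finally show ?thesis
    using summable_on_Sigma_banach[of "\<lambda>x y. f y" A B] Sigma by (simp add: has_sum_iff)
qed

lemma infsum_prod_pos_desc_lists:
  fixes g :: "nat \<Rightarrow> nat \<Rightarrow> nat \<Rightarrow> 'a::{banach, real_normed_field}"
  assumes len: "length ss = length as"
    and summable: "summable (chain_coeff (\<lambda>s a k. norm (g s a k)) ss as)"
  shows "infsum (\<lambda>ks. \<Prod>j<length ss. g (ss ! j) (as ! j) (ks ! j)) (pos_desc_lists (length ss))
       = (\<Sum>m. chain_coeff g ss as m)"
proof -
  let ?P = "\<lambda>ks. \<Prod>j<length ss. g (ss ! j) (as ! j) (ks ! j)"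
  define D where "D m = {ks \<in> pos_desc_lists (length ss). head_or_zero ks = m}" for m
  have U: "pos_desc_lists (length ss) = (\<Union>m\<in>UNIV. D m)" by (auto simp: D_def)
  have disj: "disjoint_family_on D UNIV" by (auto simp: disjoint_family_on_def D_def)
  have fin: "finite (D m)" for m
    unfolding D_def by (rule finite_subset[OF _ finite_pos_desc_lists_head_le[of _ m]]) auto
  have "(\<lambda>ks. norm (?P ks)) summable_on (\<Union>m\<in>UNIV. D m)"
  proof (rule summable_on_UnionI)
    show "((\<lambda>ks. norm (?P ks)) has_sum chain_coeff (\<lambda>s a k. norm (g s a k)) ss as m) (D m)" for m
      using sum_prod_pos_desc_lists_head[OF len, of "\<lambda>s a k. norm (g s a k)" m] fin[of m]
      by (intro has_sum_finiteI) (simp_all add: D_def prod_norm)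
    show "chain_coeff (\<lambda>s a k. norm (g s a k)) ss as summable_on UNIV"
      by (rule summable_nonneg_imp_summable_on[OF summable chain_coeff_norm_nonneg])
  qed (use disj in auto)
  then have "((\<lambda>m. infsum ?P (D m)) has_sum infsum ?P (pos_desc_lists (length ss))) UNIV"
    unfolding U by (rule has_sum_infsum_UN[OF abs_summable_summable disj])
  moreover have "infsum ?P (D m) = chain_coeff g ss as m" for m
    using sum_prod_pos_desc_lists_head[OF len, of g m] fin[of m] by (simp add: D_def)
  ultimately have "(chain_coeff g ss as has_sum infsum ?P (pos_desc_lists (length ss))) UNIV"
    by simp
  then show ?thesis by (auto dest: has_sum_imp_sums simp: sums_iff)
qed

lemma norm_zeta_factor_le:
  assumes q: "norm q < 1"
  shows "norm (zeta_factor q s a m) \<le> norm q ^ (m * (s - a)) * (1 / (1 - norm q)) ^ s"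
proof -
  have "norm (zeta_factor q s a m) = norm q ^ (m * (s - a)) * norm (1 / (1 - q ^ m)) ^ s"
    by (simp add: zeta_factor_def norm_mult norm_power norm_divide power_one_over)
  also have "\<dots> \<le> norm q ^ (m * (s - a)) * (1 / (1 - norm q)) ^ s"
    by (intro mult_left_mono power_mono norm_one_over_one_minus_power_le[OF q]) auto
  finally show ?thesis .
qed

lemma summable_chain_coeff_norm_zeta_factor:
  assumes q: "norm q < 1" and lt: "a < s"
  shows "summable (chain_coeff (\<lambda>s a k. norm (zeta_factor q s a k)) (s # ss) (a # as))"
proof -
  define C where "C s = (1 / (1 - norm q)) ^ s" for s
  define H where "H m = (\<Sum>n<m. chain_coeff (\<lambda>s a k. norm (zeta_factor q s a k)) ss as n)" for m
  have bound: "norm (zeta_factor q s a m) \<le> C s" for s a m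
  proof -
    have "norm q ^ (m * (s - a)) * C s \<le> 1 * C s"
      using q by (intro mult_right_mono) (auto simp: C_def power_le_one)
    then show ?thesis using norm_zeta_factor_le[OF q, of s a m] by (simp add: C_def)
  qed
  have decay: "norm (zeta_factor q s a m) \<le> norm q ^ m * C s" for m
  proof -
    have "norm q ^ (m * (s - a)) \<le> norm q ^ m"
      using q lt by (intro power_decreasing) auto
    moreover have "0 \<le> C s" using q by (simp add: C_def)
    ultimately have "norm q ^ (m * (s - a)) * C s \<le> norm q ^ m * C s" by (rule mult_right_mono)
    then show ?thesis
      using norm_zeta_factor_le[OF q, of s a m] by (simp add: C_def)
  qed
  have "ereal (norm q) < 1" using q by simp
  also have "1 \<le> min 1 (conv_radius (chain_coeff (\<lambda>s a k. norm (zeta_factor q s a k)) ss as))"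
    using conv_radius_chain_coeff[of "\<lambda>s a k. norm (zeta_factor q s a k)" "\<lambda>s a. C s"] bound by simp
  also have "\<dots> \<le> conv_radius H"
    unfolding H_def by (rule conv_radius_partial_sums_ge)
  finally have "summable (\<lambda>m. norm (H m * norm q ^ m))"
    using abs_summable_in_conv_radius[of "norm q" H] by simp
  then have "summable (\<lambda>m. C s * (H m * norm q ^ m))"
    by (rule summable_mult[OF summable_norm_cancel])
  then have "summable (\<lambda>m. norm q ^ m * C s * H m)"
    by (simp only: mult.commute mult.left_commute)
  then show ?thesis
  proof (rule summable_comparison_test')
    fix m
    have H_nonneg: "0 \<le> H m" unfolding H_def by (intro sum_nonneg chain_coeff_norm_nonneg)
    have "norm (chain_coeff (\<lambda>s a k. norm (zeta_factor q s a k)) (s # ss) (a # as) m)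
        = chain_coeff (\<lambda>s a k. norm (zeta_factor q s a k)) (s # ss) (a # as) m"
      by (simp only: real_norm_def abs_of_nonneg[OF chain_coeff_norm_nonneg])
    also have "\<dots> = norm (zeta_factor q s a m) * H m" by (simp add: H_def)
    also have "\<dots> \<le> norm q ^ m * C s * H m" by (rule mult_right_mono[OF decay H_nonneg])
    finally show "norm (chain_coeff (\<lambda>s a k. norm (zeta_factor q s a k)) (s # ss) (a # as) m)
        \<le> norm q ^ m * C s * H m" .
  qed
qed

lemma mzq_map2_minus_eq_infsum:
  assumes "length a = length s"
  shows "mzq q (map2 (-) s a) s
       = infsum (\<lambda>ks. \<Prod>j<length s. zeta_factor q (s ! j) (a ! j) (ks ! j)) (pos_desc_lists (length s))"
  unfolding mzq_def pos_desc_lists_def zeta_factor_def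
  using assms by (intro infsum_cong prod.cong) auto

theorem theorem6p3:
  fixes q :: complex and s a :: "nat list"
  assumes "norm q < 1"
    and "length s \<ge> 1"
    and "length a = length s"
    and "\<forall>j<length s. 1 \<le> s ! j"
    and "\<forall>j<length s. a ! j \<le> s ! j"
    and "\<forall>j\<in>{1..length s}. (\<Sum>i<j. a ! i) < (\<Sum>i<j. s ! i)"
  shows "zetaq q (map2 (-) s a) s = (1 - q) ^ sum_list s * Gfun q s a 1 \<and>
         mzq q (map2 (-) s a) s = Gfun q s a 1"
proof -
  obtain s0 ss where s: "s = s0 # ss" using assms(2) by (cases s) auto
  obtain a0 as where a: "a = a0 # as" using assms(3) s by (cases a) auto
  have len: "length ss = length as" using assms(3) s a by simp
  have le: "\<forall>j<length ss. as ! j \<le> ss ! j" using assms(5) s a by auto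
  \<comment> \<open>only the instance j = 1 of the last hypothesis is needed\<close>
  have lt: "a0 < s0" using assms(6) s a by force
  have "mzq q (map2 (-) s a) s
      = infsum (\<lambda>ks. \<Prod>j<length s. zeta_factor q (s ! j) (a ! j) (ks ! j)) (pos_desc_lists (length s))"
    by (rule mzq_map2_minus_eq_infsum[OF assms(3)])
  also have "\<dots> = (\<Sum>m. chain_coeff (zeta_factor q) s a m)"
    unfolding s a
    by (rule infsum_prod_pos_desc_lists)
       (use len summable_chain_coeff_norm_zeta_factor[OF assms(1) lt] in simp_all)
  also have "\<dots> = Gfun q s a 1"
    unfolding s a by (rule Gfun_Cons_at_1[OF assms(1) len le lt, symmetric])
  finally show ?thesis by (simp add: zetaq_def)
qed

end
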